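(* Let $F$ be a diagonal matching rule for $G$ and let $M$ be the prefix matching generated by $F$. If $M$ is a Morse matching, then $G$ is diagonal.
   Context: $G$ is a finite simple connected graph with shortest-path distance $d$; $\ell(x_0,\dots,x_k)=\sum_{i=0}^{k-1}d(x_i,x_{i+1})$. The magnitude chain complex $\mathrm{MC}_{k,l}(G)$ is the free abelian group on $I_{k,l}(G)=\{(x_0,\dots,x_k)\in V(G)^{k+1}:x_i\ne x_{i+1}\ \forall i,\ \ell=l\}$ with differential $\partial=\sum_{i=1}^{k-1}(-1)^i\partial_i$, where $\partial_i$ deletes $x_i$ if this does not change $\ell$ and is $0$ otherwise; $\mathrm{MH}_{k,l}(G)=H_k(\mathrm{MC}_{*,l}(G))$; $G$ is diagonal if $\mathrm{MH}_{k,l}(G)=0$ for $k\ne l$. Elements of $I_{k,l}(G)$ are called sequences. $\Gamma$ is the directed graph on sequences with an edge $a\to b$ whenever $\partial_i a=b\neq0$ for some $i$. A matching is a set of pairwise vertex-disjoint edges of $\Gamma$; $\Gamma^M$ is $\Gamma$ with edges of $M$ reversed; $M$ is Morse if $\Gamma^M$ has no directed cycle. Matching states: "unmatched", "insert$(i,v)$" (matched to $(x_0,\dots,x_i,v,x_{i+1},\dots,x_k)$), "delete$(i)$" (matched to $(x_0,\dots,\hat x_i,\dots,x_k)$). A prefix matching: whenever $(x_0,\dots,x_k)$ has state insert$(i,v)$ (resp. delete$(i)$), every sequence $(x_0,\dots,x_{i+1},y_{i+2},\dots,y_{k'})$ has the same state. A matching rule is a function $F$ from sequences to $\{\epsilon\}\cup\{\iota(v):v\in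 V(G)\}\cup\{\delta\}$; a prefix matching $M$ is generated by $F$ if for every sequence $(x_0,\dots,x_k)$, $k\ge1$, with unmatched prefix $(x_0,\dots,x_{k-1})$, its state is insert$(k-1,v)$ iff $F(x_0,\dots,x_k)=\iota(v)$ and delete$(k-1)$ iff $F(x_0,\dots,x_k)=\delta$. $F$ is valid if (1) $F(x_0,\dots,x_k)=\iota(v)$ implies $v\notin\{x_{k-1},x_k\}$, $d(x_{k-1},v)+d(v,x_k)=d(x_{k-1},x_k)$, $F(x_0,\dots,x_{k-1},v)=\epsilon$, $F(x_0,\dots,x_{k-1},v,x_k)=\delta$; (2) $F(x_0,\dots,x_k)=\delta$ implies $d(x_{k-2},x_{k-1})+d(x_{k-1},x_k)=d(x_{k-2},x_k)$ and $F(x_0,\dots,x_{k-2},x_k)=\iota(x_{k-1})$. A valid $F$ is diagonal if, w.r.t. the prefix matching it generates, $F(x_0,\dots,x_k)\ne\epsilon$ for every sequence with unmatched prefix $(x_0,\dots,x_{k-1})$ and $d(x_{k-1},x_k)\ge2$. *)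

theory Defs
  imports Main
begin

definition simple_graph :: "'a set \<Rightarrow> ('a \<Rightarrow> 'a \<Rightarrow> bool) \<Rightarrow> bool" where
  "simple_graph V E \<longleftrightarrow> finite V \<and> (\<forall>x y. E x y \<longrightarrow> x \<in> V \<and> y \<in> V)
     \<and> (\<forall>x y. E x y \<longrightarrow> E y x) \<and> (\<forall>x. \<not> E x x)"

definition is_walk :: "('a \<Rightarrow> 'a \<Rightarrow> bool) \<Rightarrow> 'a list \<Rightarrow> bool" where
  "is_walk E p \<longleftrightarrow> p \<noteq> [] \<and> (\<forall>i < length p - 1. E (p ! i) (p ! Suc i))"

definition connected_graph :: "'a set \<Rightarrow> ('a \<Rightarrow> 'a \<Rightarrow> bool) \<Rightarrow> bool" where
  "connected_graph V E \<longleftrightarrow> (\<forall>x\<in>V. \<forall>y\<in>V. \<exists>p. is_walk E p \<and> hd p = x \<and> last p = y)"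

definition gdist :: "('a \<Rightarrow> 'a \<Rightarrow> bool) \<Rightarrow> 'a \<Rightarrow> 'a \<Rightarrow> nat" where
  "gdist E x y = (LEAST n. \<exists>p. is_walk E p \<and> hd p = x \<and> last p = y \<and> length p = Suc n)"

text \<open>Length ell of a tuple (x_0,...,x_k), represented as a list of length k+1.\<close>
definition seq_len :: "('a \<Rightarrow> 'a \<Rightarrow> bool) \<Rightarrow> 'a list \<Rightarrow> nat" where
  "seq_len E xs = (\<Sum>i < length xs - 1. gdist E (xs ! i) (xs ! Suc i))"

definition is_seq :: "'a set \<Rightarrow> 'a list \<Rightarrow> bool" where
  "is_seq V xs \<longleftrightarrow> xs \<noteq> [] \<and> set xs \<subseteq> V \<and> (\<forall>i < length xs - 1. xs ! i \<noteq> xs ! Suc i)"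

definition Iseq :: "'a set \<Rightarrow> ('a \<Rightarrow> 'a \<Rightarrow> bool) \<Rightarrow> nat \<Rightarrow> nat \<Rightarrow> 'a list set" where
  "Iseq V E k l = {xs. is_seq V xs \<and> length xs = Suc k \<and> seq_len E xs = l}"

definition del_at :: "nat \<Rightarrow> 'a list \<Rightarrow> 'a list" where
  "del_at i xs = take i xs @ drop (Suc i) xs"

definition ins_at :: "nat \<Rightarrow> 'a \<Rightarrow> 'a list \<Rightarrow> 'a list" where
  "ins_at i v xs = take (Suc i) xs @ v # drop (Suc i) xs"

text \<open>The face \<open>\<partial>_i\<close> of a sequence of length k+1 is nonzero: 1 \<le> i \<le> k-1 and deleting
  x_i does not change the length.\<close>
definition face_ok :: "('a \<Rightarrow> 'a \<Rightarrow> bool) \<Rightarrow> nat \<Rightarrow> 'a list \<Rightarrow> bool" where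
  "face_ok E i xs \<longleftrightarrow> 1 \<le> i \<and> i < length xs - 1 \<and> seq_len E (del_at i xs) = seq_len E xs"

text \<open>Chains in MC_{k,l}: integer-valued functions supported on I_{k,l} (a finite set),
  i.e. elements of the free abelian group on I_{k,l}.\<close>
definition is_chain :: "'a set \<Rightarrow> ('a \<Rightarrow> 'a \<Rightarrow> bool) \<Rightarrow> nat \<Rightarrow> nat \<Rightarrow> ('a list \<Rightarrow> int) \<Rightarrow> bool" where
  "is_chain V E k l c \<longleftrightarrow> (\<forall>xs. c xs \<noteq> 0 \<longrightarrow> xs \<in> Iseq V E k l)"

definition bdry :: "'a set \<Rightarrow> ('a \<Rightarrow> 'a \<Rightarrow> bool) \<Rightarrow> nat \<Rightarrow> nat \<Rightarrow> ('a list \<Rightarrow> int) \<Rightarrow> ('a list \<Rightarrow> int)" where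
  "bdry V E k l c = (\<lambda>ys. \<Sum>xs\<in>Iseq V E k l. c xs *
      (\<Sum>i\<in>{1..<k}. if face_ok E i xs \<and> del_at i xs = ys then (-1) ^ i else 0))"

text \<open>MH_{k,l}(G) = H_k(MC_{*,l}(G)) = 0, i.e. every k-cycle is a boundary.\<close>
definition MH_vanishes :: "'a set \<Rightarrow> ('a \<Rightarrow> 'a \<Rightarrow> bool) \<Rightarrow> nat \<Rightarrow> nat \<Rightarrow> bool" where
  "MH_vanishes V E k l \<longleftrightarrow>
     (\<forall>c. is_chain V E k l c \<and> bdry V E k l c = (\<lambda>_. 0) \<longrightarrow>
        (\<exists>b. is_chain V E (Suc k) l b \<and> bdry V E (Suc k) l b = c))"

definition diagonal_graph :: "'a set \<Rightarrow> ('a \<Rightarrow> 'a \<Rightarrow> bool) \<Rightarrow> bool" where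
  "diagonal_graph V E \<longleftrightarrow> (\<forall>k l. k \<noteq> l \<longrightarrow> MH_vanishes V E k l)"

definition Gamma :: "'a set \<Rightarrow> ('a \<Rightarrow> 'a \<Rightarrow> bool) \<Rightarrow> ('a list \<times> 'a list) set" where
  "Gamma V E = {(a, del_at i a) | a i. is_seq V a \<and> face_ok E i a}"

definition is_matching :: "'a set \<Rightarrow> ('a \<Rightarrow> 'a \<Rightarrow> bool) \<Rightarrow> ('a list \<times> 'a list) set \<Rightarrow> bool" where
  "is_matching V E M \<longleftrightarrow> M \<subseteq> Gamma V E \<and>
     (\<forall>a b c d. (a, b) \<in> M \<and> (c, d) \<in> M \<and> (a, b) \<noteq> (c, d) \<longrightarrow> {a, b} \<inter> {c, d} = {})"

definition Gamma_M :: "'a set \<Rightarrow> ('a \<Rightarrow> 'a \<Rightarrow> bool) \<Rightarrow> ('a list \<times> 'a list) set \<Rightarrow> ('a list \<times> 'a list) set" where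
  "Gamma_M V E M = (Gamma V E - M) \<union> M\<inverse>"

definition morse_matching :: "'a set \<Rightarrow> ('a \<Rightarrow> 'a \<Rightarrow> bool) \<Rightarrow> ('a list \<times> 'a list) set \<Rightarrow> bool" where
  "morse_matching V E M \<longleftrightarrow> is_matching V E M \<and> acyclic (Gamma_M V E M)"

definition unmatched :: "('a list \<times> 'a list) set \<Rightarrow> 'a list \<Rightarrow> bool" where
  "unmatched M x \<longleftrightarrow> (\<forall>a b. (a, b) \<in> M \<longrightarrow> x \<noteq> a \<and> x \<noteq> b)"

definition st_insert :: "('a list \<times> 'a list) set \<Rightarrow> 'a list \<Rightarrow> nat \<Rightarrow> 'a \<Rightarrow> bool" where
  "st_insert M x i v \<longleftrightarrow> Suc i < length x \<and> (ins_at i v x, x) \<in> M"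

definition st_delete :: "('a list \<times> 'a list) set \<Rightarrow> 'a list \<Rightarrow> nat \<Rightarrow> bool" where
  "st_delete M x i \<longleftrightarrow> 1 \<le> i \<and> i < length x - 1 \<and> (x, del_at i x) \<in> M"

definition prefix_matching :: "'a set \<Rightarrow> ('a \<Rightarrow> 'a \<Rightarrow> bool) \<Rightarrow> ('a list \<times> 'a list) set \<Rightarrow> bool" where
  "prefix_matching V E M \<longleftrightarrow> is_matching V E M \<and>
     (\<forall>x. is_seq V x \<longrightarrow>
        (\<forall>i v. st_insert M x i v \<longrightarrow>
           (\<forall>y. is_seq V y \<and> take (i + 2) y = take (i + 2) x \<longrightarrow> st_insert M y i v)) \<and>
        (\<forall>i. st_delete M x i \<longrightarrow>
           (\<forall>y. is_seq V y \<and> take (i + 2) y = take (i + 2) x \<longrightarrow> st_delete M y i)))"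

datatype 'a rule_val = Eps | Iota 'a | Delta

definition generated_by :: "'a set \<Rightarrow> ('a list \<Rightarrow> 'a rule_val) \<Rightarrow> ('a list \<times> 'a list) set \<Rightarrow> bool" where
  "generated_by V F M \<longleftrightarrow>
     (\<forall>x. is_seq V x \<and> 2 \<le> length x \<and> unmatched M (butlast x) \<longrightarrow>
        (\<forall>v. st_insert M x (length x - 2) v \<longleftrightarrow> F x = Iota v) \<and>
        (st_delete M x (length x - 2) \<longleftrightarrow> F x = Delta))"

text \<open>For x = (x_0,...,x_k): last x = x_k, x ! (length x - 2) = x_{k-1},
  x ! (length x - 3) = x_{k-2}.\<close>
definition valid_rule :: "'a set \<Rightarrow> ('a \<Rightarrow> 'a \<Rightarrow> bool) \<Rightarrow> ('a list \<Rightarrow> 'a rule_val) \<Rightarrow> bool" where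
  "valid_rule V E F \<longleftrightarrow>
     (\<forall>x. is_seq V x \<and> 2 \<le> length x \<longrightarrow>
        (\<forall>v. F x = Iota v \<longrightarrow>
           v \<in> V \<and> v \<noteq> x ! (length x - 2) \<and> v \<noteq> last x \<and>
           gdist E (x ! (length x - 2)) v + gdist E v (last x) = gdist E (x ! (length x - 2)) (last x) \<and>
           F (butlast x @ [v]) = Eps \<and>
           F (butlast x @ [v, last x]) = Delta) \<and>
        (F x = Delta \<longrightarrow>
           3 \<le> length x \<and>
           gdist E (x ! (length x - 3)) (x ! (length x - 2)) + gdist E (x ! (length x - 2)) (last x)
             = gdist E (x ! (length x - 3)) (last x) \<and>
           F (butlast (butlast x) @ [last x]) = Iota (x ! (length x - 2))))"

definition diagonal_rule :: "'a set \<Rightarrow> ('a \<Rightarrow> 'a \<Rightarrow> bool) \<Rightarrow> ('a list \<Rightarrow> 'a rule_val) \<Rightarrow> ('a list \<times> 'a list) set \<Rightarrow> bool" where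
  "diagonal_rule V E F M \<longleftrightarrow> valid_rule V E F \<and>
     (\<forall>x. is_seq V x \<and> 2 \<le> length x \<and> unmatched M (butlast x) \<and>
          2 \<le> gdist E (x ! (length x - 2)) (last x) \<longrightarrow> F x \<noteq> Eps)"

end

theory Submission
  imports Defs
begin

text \<open>Critical sequences lie on the diagonal: by the prefix property every prefix of an
  unmatched sequence is unmatched, so the rule \<open>F\<close> is \<open>\<epsilon>\<close> on each of them, and a
  diagonal rule is \<open>\<epsilon>\<close> only after a step of distance 1; hence an unmatched
  \<open>(x\<^sub>0, \<dots>, x\<^sub>k)\<close> has length \<open>\<ell> = k\<close>. Off the diagonal every sequence is therefore
  matched, and the usual algebraic Morse argument applies: since \<open>\<Gamma>\<^sup>M\<close> is acyclic, a
  cycle can be cleared one minimal cell at a time, either by subtracting the boundary of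
  the cell it is matched with, or because its coefficient is forced to vanish.\<close>

lemma is_walk_iff_successively: "is_walk E p \<longleftrightarrow> p \<noteq> [] \<and> successively E p"
  unfolding is_walk_def successively_conv_nth by (cases p) auto

lemma is_seq_iff_successively:
  "is_seq V xs \<longleftrightarrow> xs \<noteq> [] \<and> set xs \<subseteq> V \<and> successively (\<noteq>) xs"
  unfolding is_seq_def successively_conv_nth by (cases xs) auto

lemma is_seq_butlast:
  assumes "is_seq V xs" "2 \<le> length xs"
  shows "is_seq V (butlast xs)"
proof -
  have "xs = butlast xs @ [last xs]" using assms by (auto simp: is_seq_def)
  then have "successively (\<noteq>) (butlast xs)"
    using assms(1) unfolding is_seq_iff_successively by (metis successively_append_iff)
  moreover have "butlast xs \<noteq> []" using assms(2) by (cases xs) auto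
  ultimately show ?thesis using assms(1) by (auto simp: is_seq_iff_successively dest: in_set_butlastD)
qed

lemma seq_len_Nil [simp]: "seq_len E [] = 0"
  and seq_len_singleton [simp]: "seq_len E [x] = 0"
  by (simp_all add: seq_len_def)

lemma seq_len_Cons_Cons [simp]: "seq_len E (x # y # zs) = gdist E x y + seq_len E (y # zs)"
  by (simp add: seq_len_def sum.lessThan_Suc_shift del: sum.lessThan_Suc)

lemma seq_len_snoc: "xs \<noteq> [] \<Longrightarrow> seq_len E (xs @ [y]) = seq_len E xs + gdist E (last xs) y"
  by (induction xs rule: induct_list012) auto

lemma length_del_at [simp]: "i < length xs \<Longrightarrow> length (del_at i xs) = length xs - 1"
  unfolding del_at_def by auto

lemma nth_del_at: "i < length xs \<Longrightarrow> n < length xs - 1 \<Longrightarrow>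
    del_at i xs ! n = (if n < i then xs ! n else xs ! Suc n)"
  unfolding del_at_def by (auto simp: nth_append min_def)

lemma set_del_at_subset: "set (del_at i xs) \<subseteq> set xs"
  unfolding del_at_def by (auto dest: in_set_takeD in_set_dropD)

lemma del_at_Cons: "0 < i \<Longrightarrow> del_at i (x # xs) = x # del_at (i - 1) xs"
  unfolding del_at_def by (cases i) auto

lemma del_at_del_at:
  "i < j \<Longrightarrow> j < length xs \<Longrightarrow> del_at i (del_at j xs) = del_at (j - 1) (del_at i xs)"
  by (rule nth_equalityI) (auto simp: nth_del_at)

lemma ins_at_del_at: "1 \<le> i \<Longrightarrow> i < length xs \<Longrightarrow> ins_at (i - 1) (xs ! i) (del_at i xs) = xs"
  unfolding ins_at_def del_at_def by (simp add: min_def id_take_nth_drop[symmetric])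

text \<open>If \<open>i < j\<close>, the two deletions differ at position \<open>i\<close> unless \<open>x\<^sub>i = x\<^sub>i\<^sub>+\<^sub>1\<close>.\<close>
lemma del_at_inject:
  assumes "successively (\<noteq>) xs" "i < length xs" "j < length xs" "del_at i xs = del_at j xs"
  shows "i = j"
proof (rule ccontr)
  have neq: False if "i' < j'" "j' < length xs" "del_at i' xs = del_at j' xs" for i' j'
  proof -
    have "del_at i' xs ! i' = del_at j' xs ! i'" using that(3) by simp
    then have "xs ! Suc i' = xs ! i'"
      using that(1,2) nth_del_at[of i' xs i'] nth_del_at[of j' xs i'] by simp
    then show False using successively_nth[OF assms(1), of i'] that by simp
  qed
  assume "i \<noteq> j"
  then show False using neq assms by (metis linorder_neqE_nat)
qed


lemma gdist_self [simp]: "gdist E x x = 0"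
  unfolding gdist_def by (rule Least_eq_0) (rule exI[of _ "[x]"], simp add: is_walk_def)

locale connected_simple_graph =
  fixes V :: "'a set" and E :: "'a \<Rightarrow> 'a \<Rightarrow> bool"
  assumes simple: "simple_graph V E" and connected: "connected_graph V E"
begin

lemma shortest_walk:
  assumes "x \<in> V" "y \<in> V"
  obtains p where "is_walk E p" "hd p = x" "last p = y" "length p = Suc (gdist E x y)"
proof -
  obtain p where p: "is_walk E p" "hd p = x" "last p = y"
    using connected assms unfolding connected_graph_def by blast
  then have "\<exists>n p. is_walk E p \<and> hd p = x \<and> last p = y \<and> length p = Suc n"
    by (intro exI[of _ "length p - 1"] exI[of _ p]) (auto simp: is_walk_def)
  from LeastI_ex[OF this] show ?thesis using that unfolding gdist_def by blast
qed

lemma gdist_pos: assumes "x \<in> V" "y \<in> V" "x \<noteq> y" shows "1 \<le> gdist E x y"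
proof (rule ccontr)
  assume "\<not> 1 \<le> gdist E x y"
  then obtain p where "hd p = x" "last p = y" "length p = 1"
    using shortest_walk[OF assms(1,2)] by (metis One_nat_def less_one not_le)
  then show False using assms(3) by (cases p) auto
qed

lemma gdist_triangle:
  assumes "x \<in> V" "y \<in> V" "z \<in> V"
  shows "gdist E x z \<le> gdist E x y + gdist E y z"
proof -
  obtain p where p: "is_walk E p" "hd p = x" "last p = y" "length p = Suc (gdist E x y)"
    using shortest_walk[OF assms(1,2)] .
  obtain q where q: "is_walk E q" "hd q = y" "last q = z" "length q = Suc (gdist E y z)"
    using shortest_walk[OF assms(2,3)] .
  obtain q' where q': "q = y # q'" using q by (cases q) (auto simp: is_walk_def)
  have "is_walk E (p @ q')" using p q q'
    by (auto simp: is_walk_iff_successively successively_append_iff successively_Cons)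
  moreover have "hd (p @ q') = x" "last (p @ q') = z"
    using p q q' by (auto simp: is_walk_def)
  moreover have "length (p @ q') = Suc (gdist E x y + gdist E y z)" using p q q' by simp
  ultimately show ?thesis unfolding gdist_def by (intro Least_le) blast
qed

text \<open>Deleting \<open>x\<^sub>i\<close> replaces \<open>d(x\<^sub>i\<^sub>-\<^sub>1, x\<^sub>i) + d(x\<^sub>i, x\<^sub>i\<^sub>+\<^sub>1)\<close> by \<open>d(x\<^sub>i\<^sub>-\<^sub>1, x\<^sub>i\<^sub>+\<^sub>1)\<close>;
  stated additively to avoid truncated subtraction.\<close>
lemma seq_len_del_at:
  assumes "1 \<le> i" "i < length xs - 1"
  shows "seq_len E xs + gdist E (xs ! (i - 1)) (xs ! Suc i) =
    seq_len E (del_at i xs) + gdist E (xs ! (i - 1)) (xs ! i) + gdist E (xs ! i) (xs ! Suc i)"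
  using assms
proof (induction xs arbitrary: i)
  case (Cons x ys)
  show ?case
  proof (cases "i = 1")
    case True
    then obtain y z rest where "ys = y # z # rest" using Cons.prems
      by (cases ys; cases "tl ys") auto
    then show ?thesis using True by (simp add: del_at_def)
  next
    case False
    then obtain y ys' where ys: "ys = y # ys'" and i: "2 \<le> i" using Cons.prems by (cases ys) auto
    have IH: "seq_len E ys + gdist E (ys ! (i - 2)) (ys ! i) =
        seq_len E (del_at (i - 1) ys) + gdist E (ys ! (i - 2)) (ys ! (i - 1)) + gdist E (ys ! (i - 1)) (ys ! i)"
      using Cons.IH[of "i - 1"] Cons.prems i by (simp add: numeral_2_eq_2 Suc_diff_Suc)
    have "del_at i (x # ys) = x # del_at (i - 1) ys" using i by (simp add: del_at_Cons)
    moreover have "del_at (i - 1) ys = y # del_at (i - 2) ys'"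
      using i by (simp add: ys del_at_Cons numeral_2_eq_2)
    moreover have "(x # ys) ! (i - 1) = ys ! (i - 2)" "(x # ys) ! i = ys ! (i - 1)"
      "(x # ys) ! Suc i = ys ! i" using i by (auto simp: numeral_2_eq_2 nth_Cons')
    ultimately show ?thesis using IH by (simp add: ys)
  qed
qed simp

lemma seq_len_del_at_le:
  assumes "set xs \<subseteq> V" "1 \<le> i" "i < length xs - 1"
  shows "seq_len E (del_at i xs) \<le> seq_len E xs"
proof -
  have "xs ! (i - 1) \<in> V" "xs ! i \<in> V" "xs ! Suc i \<in> V" using assms by auto
  then have "gdist E (xs ! (i - 1)) (xs ! Suc i)
      \<le> gdist E (xs ! (i - 1)) (xs ! i) + gdist E (xs ! i) (xs ! Suc i)"
    by (rule gdist_triangle)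
  then show ?thesis using seq_len_del_at[OF assms(2,3)] by linarith
qed

text \<open>If \<open>x\<^sub>i\<^sub>-\<^sub>1 = x\<^sub>i\<^sub>+\<^sub>1\<close>, deleting \<open>x\<^sub>i\<close> would shorten the length by \<open>2 d(x\<^sub>i\<^sub>-\<^sub>1, x\<^sub>i) > 0\<close>.\<close>
lemma is_seq_del_at:
  assumes seq: "is_seq V xs" and face: "face_ok E i xs"
  shows "is_seq V (del_at i xs)"
proof -
  have i: "1 \<le> i" "i < length xs - 1" and len: "seq_len E (del_at i xs) = seq_len E xs"
    using face by (auto simp: face_ok_def)
  have sv: "set xs \<subseteq> V" and su: "successively (\<noteq>) xs"
    using seq by (auto simp: is_seq_iff_successively)
  have "xs ! (i - 1) \<noteq> xs ! i" using successively_nth[OF su, of "i - 1"] i by simp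
  then have "1 \<le> gdist E (xs ! (i - 1)) (xs ! i)" using sv i by (intro gdist_pos) auto
  then have "1 \<le> gdist E (xs ! (i - 1)) (xs ! Suc i)" using seq_len_del_at[OF i] len by linarith
  then have "xs ! (i - 1) \<noteq> xs ! Suc i" by (metis gdist_self not_one_le_zero)
  moreover have "last (take i xs) = xs ! (i - 1)" using i by (subst last_conv_nth) auto
  moreover have "hd (drop (Suc i) xs) = xs ! Suc i" using i by (simp add: hd_drop_conv_nth)
  ultimately have "last (take i xs) \<noteq> hd (drop (Suc i) xs)" by simp
  moreover have "successively (\<noteq>) (take i xs)" "successively (\<noteq>) (drop (Suc i) xs)"
    using su by (metis append_take_drop_id successively_append_iff)+
  ultimately have "successively (\<noteq>) (del_at i xs)"
    unfolding del_at_def successively_append_iff by auto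
  moreover have "del_at i xs \<noteq> []" using i by (auto simp: del_at_def)
  moreover have "set (del_at i xs) \<subseteq> V" using set_del_at_subset[of i xs] sv by (rule subset_trans)
  ultimately show ?thesis by (simp add: is_seq_iff_successively)
qed

lemma finite_Iseq: "finite (Iseq V E k l)"
proof (rule finite_subset)
  show "Iseq V E k l \<subseteq> {xs. set xs \<subseteq> V \<and> length xs = Suc k}"
    by (auto simp: Iseq_def is_seq_def)
  show "finite {xs. set xs \<subseteq> V \<and> length xs = Suc k}"
    using simple by (simp add: simple_graph_def finite_lists_length_eq)
qed

lemma del_at_in_Iseq: "xs \<in> Iseq V E (Suc k) l \<Longrightarrow> face_ok E i xs \<Longrightarrow> del_at i xs \<in> Iseq V E k l"
  using is_seq_del_at by (auto simp: Iseq_def face_ok_def)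

end

definition incidence :: "('a \<Rightarrow> 'a \<Rightarrow> bool) \<Rightarrow> nat \<Rightarrow> 'a list \<Rightarrow> 'a list \<Rightarrow> int" where
  "incidence E k xs ys = (\<Sum>i\<in>{1..<k}. if face_ok E i xs \<and> del_at i xs = ys then (-1) ^ i else 0)"

lemma bdry_eq_incidence: "bdry V E k l c = (\<lambda>ys. \<Sum>xs\<in>Iseq V E k l. c xs * incidence E k xs ys)"
  unfolding bdry_def incidence_def by simp

lemma incidence_nonzero_imp_face:
  "incidence E k xs ys \<noteq> 0 \<Longrightarrow> \<exists>i. face_ok E i xs \<and> del_at i xs = ys"
  unfolding incidence_def by (rule ccontr) (auto intro: sum.neutral)

lemma incidence_face:
  assumes "is_seq V xs" "length xs = Suc k" "face_ok E i xs"
  shows "incidence E k xs (del_at i xs) = (-1) ^ i"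
proof -
  have su: "successively (\<noteq>) xs" using assms(1) by (simp add: is_seq_iff_successively)
  have i: "i \<in> {1..<k}" using assms by (auto simp: face_ok_def)
  have "incidence E k xs (del_at i xs) = (\<Sum>i'\<in>{1..<k}. if i' = i then (-1) ^ i else 0)"
    unfolding incidence_def
  proof (rule sum.cong[OF refl])
    fix i' assume "i' \<in> {1..<k}"
    then have "del_at i' xs = del_at i xs \<Longrightarrow> i' = i"
      using del_at_inject[OF su, of i' i] i assms(2) by auto
    then show "(if face_ok E i' xs \<and> del_at i' xs = del_at i xs then (-1) ^ i' else 0) =
        (if i' = i then (-1) ^ i else (0::int))" using assms(3) by auto
  qed
  also have "\<dots> = (-1) ^ i" using i by simp
  finally show ?thesis .
qed

lemma incidence_face_squared:
  "is_seq V xs \<Longrightarrow> length xs = Suc k \<Longrightarrow> face_ok E i xs \<Longrightarrow>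
    incidence E k xs (del_at i xs) * incidence E k xs (del_at i xs) = 1"
  by (simp add: incidence_face power_mult_distrib[symmetric])

lemma bdry_diff: "bdry V E k l (\<lambda>x. f x - g x) = (\<lambda>y. bdry V E k l f y - bdry V E k l g y)"
  unfolding bdry_eq_incidence by (simp add: left_diff_distrib sum_subtractf)

lemma bdry_zero: "bdry V E k l (\<lambda>_. 0) = (\<lambda>_. 0)"
  unfolding bdry_eq_incidence by simp

lemma sum_zero_by_sign_reversing_involution:
  fixes f :: "'b \<Rightarrow> int"
  assumes "\<And>p. p \<in> T \<Longrightarrow> h p \<in> T" "\<And>p. p \<in> T \<Longrightarrow> h (h p) = p"
    "\<And>p. p \<in> T \<Longrightarrow> f (h p) = - f p"
  shows "sum f T = 0"
proof -
  have "sum (\<lambda>p. - f p) T = sum f T"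
    by (rule sum.reindex_bij_witness[of T h h]) (use assms in auto)
  then show ?thesis by (simp add: sum_negf)
qed

context connected_simple_graph
begin

lemma bdry_add_single:
  assumes "p \<in> Iseq V E k l"
  shows "bdry V E k l (\<lambda>x. f x + (if x = p then t else 0)) ys = bdry V E k l f ys + t * incidence E k p ys"
  using assms finite_Iseq unfolding bdry_eq_incidence
  by (simp add: distrib_right sum.distrib if_distrib[where f = "\<lambda>z. z * _"] sum.delta cong: if_cong)

text \<open>The term of \<open>\<partial>\<^sub>j \<partial>\<^sub>i\<close> in \<open>\<partial>(\<partial> xs)\<close> at the sequence \<open>zs\<close>.\<close>
definition double_face_term :: "'a list \<Rightarrow> 'a list \<Rightarrow> nat \<times> nat \<Rightarrow> int" where
  "double_face_term xs zs p = (if face_ok E (fst p) xs \<and> face_ok E (snd p) (del_at (fst p) xs)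
       \<and> del_at (snd p) (del_at (fst p) xs) = zs then (-1) ^ (fst p + snd p) else 0)"

text \<open>The simplicial identity \<open>\<partial>\<^sub>i \<partial>\<^sub>j = \<partial>\<^sub>j\<^sub>-\<^sub>1 \<partial>\<^sub>i\<close> for \<open>i < j\<close>. Both composites are nonzero
  iff deleting \<open>x\<^sub>i\<close> and \<open>x\<^sub>j\<close> preserves the length, since each deletion can only shorten it.\<close>
lemma double_face_term_swap:
  assumes V: "set xs \<subseteq> V" and ij: "1 \<le> i" "i < j"
  shows "double_face_term xs zs (i, j - 1) = - double_face_term xs zs (j, i)"
proof (cases "j < length xs - 1")
  case False
  then show ?thesis using ij by (auto simp: double_face_term_def face_ok_def)
next
  case True
  let ?d = "del_at i (del_at j xs)"
  have dd: "?d = del_at (j - 1) (del_at i xs)" using ij True by (intro del_at_del_at) auto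
  have V': "set (del_at j xs) \<subseteq> V" "set (del_at i xs) \<subseteq> V"
    using V set_del_at_subset by (metis subset_trans)+
  have "seq_len E (del_at j xs) \<le> seq_len E xs" "seq_len E ?d \<le> seq_len E (del_at j xs)"
    using seq_len_del_at_le[OF V] seq_len_del_at_le[OF V'(1), of i] ij True by auto
  then have c1: "face_ok E j xs \<and> face_ok E i (del_at j xs) \<longleftrightarrow> seq_len E ?d = seq_len E xs"
    using ij True by (auto simp: face_ok_def)
  have "seq_len E (del_at i xs) \<le> seq_len E xs" "seq_len E ?d \<le> seq_len E (del_at i xs)"
    using seq_len_del_at_le[OF V, of i] seq_len_del_at_le[OF V'(2), of "j - 1"] ij True
    unfolding dd by auto
  then have c2: "face_ok E i xs \<and> face_ok E (j - 1) (del_at i xs) \<longleftrightarrow> seq_len E ?d = seq_len E xs"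
    using ij True unfolding dd by (auto simp: face_ok_def)
  obtain j' where "j = Suc j'" using ij by (cases j) auto
  then have sign: "(-1::int) ^ (i + (j - 1)) = - ((-1) ^ (j + i))" by (simp add: add.commute)
  show ?thesis unfolding double_face_term_def fst_conv snd_conv using c1 c2 dd sign by auto
qed

lemma sum_double_face_term:
  assumes V: "set xs \<subseteq> V"
  shows "(\<Sum>p\<in>{1..<Suc k} \<times> {1..<k}. double_face_term xs zs p) = 0"
proof (rule sum_zero_by_sign_reversing_involution[where h = "\<lambda>(j, i). if i < j then (i, j - 1) else (i + 1, j)"])
  fix p assume p: "p \<in> {1..<Suc k} \<times> {1..<k}"
  obtain j i where ji: "p = (j, i)" by (cases p)
  show "(case p of (j, i) \<Rightarrow> if i < j then (i, j - 1) else (i + 1, j)) \<in> {1..<Suc k} \<times> {1..<k}"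
    "(case (case p of (j, i) \<Rightarrow> if i < j then (i, j - 1) else (i + 1, j)) of
        (j, i) \<Rightarrow> if i < j then (i, j - 1) else (i + 1, j)) = p"
    using p ji by auto
  show "double_face_term xs zs (case p of (j, i) \<Rightarrow> if i < j then (i, j - 1) else (i + 1, j)) =
      - double_face_term xs zs p"
  proof (cases "i < j")
    case True
    then show ?thesis using ji p double_face_term_swap[OF V, of i j zs] by auto
  next
    case False
    then have "double_face_term xs zs (j, i + 1 - 1) = - double_face_term xs zs (i + 1, j)"
      using ji p by (intro double_face_term_swap[OF V]) auto
    then show ?thesis using ji False by auto
  qed
qed

lemma sum_incidence_incidence:
  assumes xs: "xs \<in> Iseq V E (Suc k) l"
  shows "(\<Sum>ys\<in>Iseq V E k l. incidence E (Suc k) xs ys * incidence E k ys zs) = 0"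
proof -
  have "(\<Sum>ys\<in>Iseq V E k l. incidence E (Suc k) xs ys * incidence E k ys zs)
    = (\<Sum>j\<in>{1..<Suc k}. \<Sum>ys\<in>Iseq V E k l. if ys = del_at j xs \<and> face_ok E j xs
        then (-1) ^ j * incidence E k ys zs else 0)"
    unfolding incidence_def[of E "Suc k"] sum_distrib_right
    by (subst sum.swap) (intro sum.cong refl, auto)
  also have "\<dots> = (\<Sum>j\<in>{1..<Suc k}.
      if face_ok E j xs then (-1) ^ j * incidence E k (del_at j xs) zs else 0)"
    using del_at_in_Iseq[OF xs] finite_Iseq by (intro sum.cong refl) (simp add: sum.delta')
  also have "\<dots> = (\<Sum>j\<in>{1..<Suc k}. \<Sum>i\<in>{1..<k}. double_face_term xs zs (j, i))"
    unfolding incidence_def double_face_term_def fst_conv snd_conv sum_distrib_left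
    by (intro sum.cong refl) (auto intro!: sum.cong simp: power_add)
  also have "\<dots> = 0"
    using sum_double_face_term xs by (simp add: sum.cartesian_product Iseq_def is_seq_def)
  finally show ?thesis .
qed

lemma bdry_bdry: "bdry V E k l (bdry V E (Suc k) l b) = (\<lambda>_. 0)"
proof
  fix zs
  have "bdry V E k l (bdry V E (Suc k) l b) zs = (\<Sum>xs\<in>Iseq V E (Suc k) l.
      b xs * (\<Sum>ys\<in>Iseq V E k l. incidence E (Suc k) xs ys * incidence E k ys zs))"
    unfolding bdry_eq_incidence sum_distrib_right sum_distrib_left
    by (subst sum.swap) (simp add: mult.assoc)
  then show "bdry V E k l (bdry V E (Suc k) l b) zs = 0" by (simp add: sum_incidence_incidence)
qed

end

lemma acyclic_finite_has_minimal:
  assumes "finite D" "D \<noteq> {}" "acyclic R"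
  obtains a where "a \<in> D" "\<And>y. y \<in> D \<Longrightarrow> (y, a) \<notin> R\<^sup>+"
proof -
  let ?S = "R\<^sup>+ \<inter> D \<times> D"
  have "?S\<^sup>+ \<subseteq> (R\<^sup>+)\<^sup>+"
    by (rule subrelI, erule trancl_mono) auto
  then have "acyclic ?S" using assms(3) by (auto simp: acyclic_def)
  moreover have "finite ?S" using assms(1) by (simp add: finite_subset[of _ "D \<times> D"])
  ultimately have "wf ?S" by (simp add: finite_acyclic_wf)
  then obtain a where "a \<in> D" "\<And>y. (y, a) \<in> ?S \<Longrightarrow> y \<notin> D"
    using wfE_min assms(2) by (metis ex_in_conv)
  then show ?thesis using that by blast
qed

locale graph_with_morse_matching = connected_simple_graph +
  fixes M :: "('a list \<times> 'a list) set"
  assumes morse: "morse_matching V E M"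
begin

abbreviation reach :: "('a list \<times> 'a list) set" where
  "reach \<equiv> (Gamma_M V E M)\<^sup>+"

lemma matched_pair_is_face:
  "(a, b) \<in> M \<Longrightarrow> \<exists>i. is_seq V a \<and> face_ok E i a \<and> b = del_at i a"
  using morse unfolding morse_matching_def is_matching_def Gamma_def by blast

lemma matched_pairs_disjoint:
  "(a, b) \<in> M \<Longrightarrow> (c, d) \<in> M \<Longrightarrow> (a, b) \<noteq> (c, d) \<Longrightarrow> {a, b} \<inter> {c, d} = {}"
  using morse unfolding morse_matching_def is_matching_def by blast

lemma reach_matched: "(a, b) \<in> M \<Longrightarrow> (b, a) \<in> reach"
  by (auto simp: Gamma_M_def)

lemma reach_face:
  "is_seq V x \<Longrightarrow> face_ok E i x \<Longrightarrow> (x, del_at i x) \<notin> M \<Longrightarrow> (x, del_at i x) \<in> reach"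
  by (rule r_into_trancl) (auto simp: Gamma_M_def Gamma_def)

lemma reach_face_near_matched:
  assumes "(u, w) \<in> M" "is_seq V x" "incidence E k x y \<noteq> 0"
    and "(x, y) \<noteq> (u, w)" "{x, y} \<inter> {u, w} \<noteq> {}"
  shows "(x, y) \<in> reach"
proof -
  obtain i where i: "face_ok E i x" "del_at i x = y" using incidence_nonzero_imp_face assms(3) by blast
  have "(x, y) \<notin> M" using matched_pairs_disjoint[OF assms(1)] assms(4,5) by blast
  then show ?thesis using reach_face[OF assms(2) i(1)] i(2) by simp
qed

text \<open>The coefficient of \<open>a'\<close> in \<open>\<partial> c\<close> is \<open>\<plusminus>c a\<close>: any other \<open>x\<close> in the support having \<open>a'\<close>
  as a face would lie below \<open>a\<close>.\<close>
lemma cycle_vanishes_at_minimal_matched_down: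
  assumes cycle: "bdry V E k l c = (\<lambda>_. 0)" and aa': "(a, a') \<in> M" and a: "a \<in> Iseq V E k l"
    and below: "\<And>x. x \<in> Iseq V E k l \<Longrightarrow> c x \<noteq> 0 \<Longrightarrow> (x, a) \<notin> reach"
  shows "c a = 0"
proof -
  obtain i where i: "is_seq V a" "face_ok E i a" "a' = del_at i a"
    using matched_pair_is_face[OF aa'] by blast
  have "bdry V E k l c a' = (\<Sum>x\<in>Iseq V E k l. if x = a then c a * incidence E k a a' else 0)"
    unfolding bdry_eq_incidence
  proof (rule sum.cong[OF refl])
    fix x assume x: "x \<in> Iseq V E k l"
    have "c x * incidence E k x a' = 0" if "x \<noteq> a"
    proof (rule ccontr)
      assume "c x * incidence E k x a' \<noteq> 0"
      then have "(x, a') \<in> reach"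
        using reach_face_near_matched[OF aa'] x that by (auto simp: Iseq_def)
      then have "(x, a) \<in> reach" using reach_matched[OF aa'] by simp
      then show False using below x \<open>c x * incidence E k x a' \<noteq> 0\<close> by fastforce
    qed
    then show "c x * incidence E k x a' = (if x = a then c a * incidence E k a a' else 0)" by simp
  qed
  also have "\<dots> = c a * (-1) ^ i"
    using a finite_Iseq incidence_face[OF i(1) _ i(2)] i(3) by (simp add: Iseq_def)
  finally show ?thesis using cycle by (simp add: fun_eq_iff)
qed

text \<open>Subtracting the right multiple of \<open>\<partial> u\<close> removes \<open>a\<close> from the support; the other faces
  of \<open>u\<close> are reached from \<open>a\<close> through \<open>u\<close>, so they stay in \<open>D\<close>.\<close>
lemma cycle_clear_matched_coface:
  assumes cycle: "bdry V E k l c = (\<lambda>_. 0)" and ua: "(u, a) \<in> M"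
    and D: "a \<in> D" "D \<subseteq> Iseq V E k l" "\<And>z. z \<in> Iseq V E k l \<Longrightarrow> (a, z) \<in> reach \<Longrightarrow> z \<in> D"
    and supp: "\<And>x. c x \<noteq> 0 \<Longrightarrow> x \<in> D"
  obtains c' t where "u \<in> Iseq V E (Suc k) l" "bdry V E k l c' = (\<lambda>_. 0)"
    "\<And>x. c' x \<noteq> 0 \<Longrightarrow> x \<in> D - {a}" "\<And>x. c x = c' x + t * incidence E (Suc k) u x"
proof -
  obtain i where i: "is_seq V u" "face_ok E i u" "a = del_at i u"
    using matched_pair_is_face[OF ua] by blast
  have uI: "u \<in> Iseq V E (Suc k) l" using i D(1,2) by (auto simp: Iseq_def face_ok_def)
  define t where "t = c a * incidence E (Suc k) u a"
  define c' where "c' = (\<lambda>x. c x - bdry V E (Suc k) l (\<lambda>y. if y = u then t else 0) x)"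
  have c'_eq: "c' x = c x - t * incidence E (Suc k) u x" for x
    using bdry_add_single[OF uI, of "\<lambda>_. 0" t x] by (simp add: c'_def bdry_zero)
  have "c' a = 0" unfolding c'_eq t_def
    using incidence_face_squared[OF i(1) _ i(2)] uI i(3) by (simp add: Iseq_def mult.assoc)
  moreover have "x \<in> D" if "c' x \<noteq> 0" "x \<noteq> a" for x
  proof (cases "c x = 0")
    case True
    then have "incidence E (Suc k) u x \<noteq> 0" using that(1) by (simp add: c'_eq)
    moreover from this obtain j where "face_ok E j u" "del_at j u = x"
      using incidence_nonzero_imp_face by blast
    ultimately have "(u, x) \<in> reach" "x \<in> Iseq V E k l"
      using reach_face_near_matched[OF ua i(1), of "Suc k" x] that(2) del_at_in_Iseq[OF uI]
      by auto
    then show ?thesis using D(3) reach_matched[OF ua] by (meson trancl_trans)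
  qed (use supp in blast)
  moreover have "bdry V E k l c' = (\<lambda>_. 0)"
    unfolding c'_def bdry_diff bdry_bdry using cycle by simp
  ultimately show ?thesis using that[OF uI] c'_eq by (metis Diff_iff diff_add_cancel singletonD)
qed

text \<open>Induction on a set \<open>D\<close> of \<open>k\<close>-sequences carrying the cycle and closed upwards under
  \<open>reach\<close>: a \<open>reach\<close>-minimal \<open>a \<in> D\<close> can be removed from \<open>D\<close>.\<close>
lemma cycle_is_boundary_if_supported:
  assumes matched: "\<And>x. x \<in> Iseq V E k l \<Longrightarrow> \<not> unmatched M x"
    and D: "D \<subseteq> Iseq V E k l" "\<And>y z. y \<in> D \<Longrightarrow> z \<in> Iseq V E k l \<Longrightarrow> (y, z) \<in> reach \<Longrightarrow> z \<in> D"
    and cycle: "bdry V E k l c = (\<lambda>_. 0)" and supp: "\<And>x. c x \<noteq> 0 \<Longrightarrow> x \<in> D"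
  shows "\<exists>b. is_chain V E (Suc k) l b \<and> bdry V E (Suc k) l b = c"
  using D cycle supp
proof (induction "card D" arbitrary: D c rule: less_induct)
  case less
  have finD: "finite D" using less.prems(1) finite_Iseq finite_subset by blast
  show ?case
  proof (cases "D = {}")
    case True
    then have "c = (\<lambda>_. 0)" using less.prems(4) by blast
    then show ?thesis by (intro exI[of _ "\<lambda>_. 0"]) (simp add: is_chain_def bdry_zero)
  next
    case False
    obtain a where a: "a \<in> D" "\<And>y. y \<in> D \<Longrightarrow> (y, a) \<notin> reach"
      using acyclic_finite_has_minimal[OF finD False] morse by (auto simp: morse_matching_def)
    have aI: "a \<in> Iseq V E k l" using a(1) less.prems(1) by blast
    have smaller: "card (D - {a}) < card D" using finD a(1) by (meson card_Diff1_less)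
    have D': "D - {a} \<subseteq> Iseq V E k l"
      "\<And>y z. y \<in> D - {a} \<Longrightarrow> z \<in> Iseq V E k l \<Longrightarrow> (y, z) \<in> reach \<Longrightarrow> z \<in> D - {a}"
      using less.prems(1,2) a by blast+
    note IH = less.hyps[OF smaller D'(1)]
    from matched[OF aI] obtain u w where uw: "(u, w) \<in> M" "a = u \<or> a = w"
      unfolding unmatched_def by blast
    show ?thesis
    proof (cases "a = w")
      case True
      then have ua: "(u, a) \<in> M" using uw(1) by simp
      obtain c' t where uI: "u \<in> Iseq V E (Suc k) l" and c': "bdry V E k l c' = (\<lambda>_. 0)"
        "\<And>x. c' x \<noteq> 0 \<Longrightarrow> x \<in> D - {a}" "\<And>x. c x = c' x + t * incidence E (Suc k) u x"
        using cycle_clear_matched_coface[OF less.prems(3) ua a(1) less.prems(1)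
            less.prems(2)[OF a(1)] less.prems(4)] by metis
      then obtain b' where b': "is_chain V E (Suc k) l b'" "bdry V E (Suc k) l b' = c'"
        using D'(2) IH by blast
      define b where "b = (\<lambda>x. b' x + (if x = u then t else 0))"
      have "is_chain V E (Suc k) l b" using b'(1) uI by (auto simp: b_def is_chain_def)
      moreover have "bdry V E (Suc k) l b = c"
        using bdry_add_single[OF uI, of b' t] b'(2) c'(3) by (simp add: b_def fun_eq_iff)
      ultimately show ?thesis by blast
    next
      case False
      then have "c a = 0"
        using cycle_vanishes_at_minimal_matched_down[OF less.prems(3) _ aI] uw less.prems(4) a(2)
        by blast
      then have "\<And>x. c x \<noteq> 0 \<Longrightarrow> x \<in> D - {a}" using less.prems(4) by blast
      then show ?thesis using D'(2) less.prems(3) IH by blast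
    qed
  qed
qed

lemma MH_vanishes_if_all_matched:
  assumes "\<And>x. x \<in> Iseq V E k l \<Longrightarrow> \<not> unmatched M x"
  shows "MH_vanishes V E k l"
  unfolding MH_vanishes_def
proof (intro allI impI, elim conjE)
  fix c assume "is_chain V E k l c" "bdry V E k l c = (\<lambda>_. 0)"
  then show "\<exists>b. is_chain V E (Suc k) l b \<and> bdry V E (Suc k) l b = c"
    by (intro cycle_is_boundary_if_supported[OF assms order_refl]) (auto simp: is_chain_def)
qed

end

text \<open>If \<open>butlast x\<close> were matched, its state (an insertion or deletion at a position
  inside \<open>butlast x\<close>) would be inherited by \<open>x\<close>.\<close>
lemma unmatched_butlast:
  assumes pm: "prefix_matching V E M" and x: "is_seq V x" "2 \<le> length x" and u: "unmatched M x"
  shows "unmatched M (butlast x)"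
proof (rule ccontr)
  let ?p = "butlast x"
  have p: "is_seq V ?p" using is_seq_butlast x by blast
  have inherit_ins: "st_insert M ?p i v \<Longrightarrow> take (i + 2) x = take (i + 2) ?p \<Longrightarrow> st_insert M x i v"
    and inherit_del: "st_delete M ?p i \<Longrightarrow> take (i + 2) x = take (i + 2) ?p \<Longrightarrow> st_delete M x i"
    for i v using pm p x(1) unfolding prefix_matching_def by metis+
  assume "\<not> unmatched M ?p"
  then obtain a b where ab: "(a, b) \<in> M" "?p = a \<or> ?p = b" unfolding unmatched_def by blast
  obtain i where i: "is_seq V a" "face_ok E i a" "b = del_at i a"
    using ab(1) pm unfolding prefix_matching_def is_matching_def Gamma_def by blast
  have li: "1 \<le> i" "i < length a - 1" using i(2) by (auto simp: face_ok_def)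
  show False
  proof (cases "?p = a")
    case True
    then have "st_delete M ?p i" using ab(1) li i(3) by (simp add: st_delete_def)
    moreover have "take (i + 2) x = take (i + 2) ?p" using li True by (auto simp: take_butlast)
    ultimately show False using inherit_del u by (auto simp: st_delete_def unmatched_def)
  next
    case False
    then have pb: "?p = b" using ab by blast
    then have "st_insert M ?p (i - 1) (a ! i)"
      using ab(1) li i(3) ins_at_del_at[of i a] by (auto simp: st_insert_def)
    moreover have "length ?p = length a - 1" using pb i(3) li by simp
    then have "take (i - 1 + 2) x = take (i - 1 + 2) ?p" using li by (auto simp: take_butlast)
    ultimately show False using inherit_ins u by (auto simp: st_insert_def unmatched_def)
  qed
qed

context connected_simple_graph
begin

text \<open>For an unmatched \<open>x\<close> with unmatched prefix, \<open>F x = \<epsilon>\<close> since \<open>M\<close> is generated by \<open>F\<close>;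
  diagonality of \<open>F\<close> then forbids a last step of length \<open>\<ge> 2\<close>.\<close>
lemma unmatched_last_step:
  assumes dr: "diagonal_rule V E F M" and pm: "prefix_matching V E M" and gb: "generated_by V F M"
    and x: "is_seq V x" "2 \<le> length x" and u: "unmatched M x"
  shows "gdist E (x ! (length x - 2)) (last x) = 1"
proof -
  have ub: "unmatched M (butlast x)" using unmatched_butlast[OF pm x u] .
  then have "(\<forall>v. st_insert M x (length x - 2) v \<longleftrightarrow> F x = Iota v) \<and>
      (st_delete M x (length x - 2) \<longleftrightarrow> F x = Delta)"
    using gb x unfolding generated_by_def by blast
  then have "F x \<noteq> Iota v" "F x \<noteq> Delta" for v
    using u by (auto simp: st_insert_def st_delete_def unmatched_def)
  then have "F x = Eps" by (cases "F x") auto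
  then have "\<not> 2 \<le> gdist E (x ! (length x - 2)) (last x)"
    using dr x ub unfolding diagonal_rule_def by blast
  moreover have "1 \<le> gdist E (x ! (length x - 2)) (last x)"
  proof (rule gdist_pos)
    have su: "successively (\<noteq>) x" and sv: "set x \<subseteq> V" using x(1) by (auto simp: is_seq_iff_successively)
    have "Suc (length x - 2) = length x - 1" using x(2) by simp
    then have last: "last x = x ! Suc (length x - 2)" using x(2) by (subst last_conv_nth) auto
    show "x ! (length x - 2) \<in> V" "last x \<in> V" using sv x(2) unfolding last by auto
    show "x ! (length x - 2) \<noteq> last x"
      using successively_nth[OF su, of "length x - 2"] x(2) unfolding last by simp
  qed
  ultimately show ?thesis by simp
qed

lemma seq_len_unmatched:
  assumes "diagonal_rule V E F M" "prefix_matching V E M" "generated_by V F M"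
  shows "is_seq V x \<Longrightarrow> unmatched M x \<Longrightarrow> seq_len E x = length x - 1"
proof (induction x rule: rev_induct)
  case (snoc y xs)
  show ?case
  proof (cases "xs = []")
    case False
    have x: "is_seq V (xs @ [y])" "2 \<le> length (xs @ [y])" using snoc.prems False by (auto simp: Suc_le_eq)
    have "unmatched M xs" using unmatched_butlast[OF assms(2) x snoc.prems(2)] by simp
    then have "seq_len E xs = length xs - 1" using snoc.IH is_seq_butlast[OF x] by simp
    moreover have "gdist E (last xs) y = 1"
      using unmatched_last_step[OF assms x snoc.prems(2)] False
      by (simp add: nth_append last_conv_nth numeral_2_eq_2)
    ultimately show ?thesis using False by (simp add: seq_len_snoc)
  qed simp
qed simp

end

theorem corollary3p6:
  fixes V :: "'a set" and E :: "'a \<Rightarrow> 'a \<Rightarrow> bool"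
    and F :: "'a list \<Rightarrow> 'a rule_val" and M :: "('a list \<times> 'a list) set"
  assumes "simple_graph V E" and "connected_graph V E"
    and "diagonal_rule V E F M"
    and "prefix_matching V E M" and "generated_by V F M"
    and "morse_matching V E M"
  shows "diagonal_graph V E"
proof -
  interpret graph_with_morse_matching V E M using assms by unfold_locales
  have "\<not> unmatched M x" if "x \<in> Iseq V E k l" "k \<noteq> l" for x k l
    using that seq_len_unmatched[OF assms(3-5)] by (auto simp: Iseq_def)
  then show ?thesis unfolding diagonal_graph_def by (blast intro: MH_vanishes_if_all_matched)
qed

end
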